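(* Let $\Lambda=(\alpha,\lambda,f)$ be a Sieben twisted $S$-module structure on a semilattice of groups $A$ over an inverse semigroup $S$. Then the twisted $S$-module structure induced by the transversal $\rho(s)=\alpha(ss^{-1})\delta_s$ of the extension $A\overset{i}{\to}A*_\Lambda S\overset{j}{\to}S$ is $\Lambda$ itself.
   Context: A semilattice of groups is an inverse semigroup $A$ whose idempotents are central; $A_e=\{a: aa^{-1}=a^{-1}a=e\}$. An endomorphism $\varphi$ of $A$ is relatively invertible if there are $\bar\varphi\in\mathrm{End}\,A$, $e_\varphi\in E(A)$ with $\bar\varphi\varphi(a)=e_\varphi a$, $\varphi\bar\varphi(a)=\varphi(e_\varphi)a$, $e_\varphi$ the identity of $\bar\varphi(A)$, $\varphi(e_\varphi)$ the identity of $\varphi(A)$. A twisted $S$-module structure on $A$ is $(\alpha,\lambda,f)$ with $\alpha:E(S)\to E(A)$ an isomorphism, $s\mapsto\lambda_s$ relatively invertible endomorphisms, $f:S\times S\to A$ with $f(s,t)\in A_{\alpha(stt^{-1}s^{-1})}$, satisfying (i) $\lambda_e(a)=\alpha(e)a$ ($e\in E(S)$); (ii) $\lambda_s(\alpha(e))=\alpha(ses^{-1})$; (iii) $\lambda_s\lambda_t(a)=f(s,t)\lambda_{st}(a)f(s,t)^{-1}$; (iv) $f(se,e)=\alpha(ses^{-1})$, $f(e,es)=\alpha(ess^{-1})$; (v) $\lambda_s(f(t,u))f(s,tu)=f(s,t)f(st,u)$; Sieben means also $f(s,e)=\alpha(ses^{-1})$, $f(e,s)=\alpha(ess^{-1})$.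 The crossed product $A*_\Lambda S=\{a\delta_s: aa^{-1}=\alpha(ss^{-1})\}$ with $a\delta_s\cdot b\delta_t=a\lambda_s(b)f(s,t)\delta_{st}$ is an inverse semigroup, an extension of $A$ by $S$ via $i(a)=a\delta_{\alpha^{-1}(aa^{-1})}$ and $j(a\delta_s)=s$. For a transversal $\rho$ of $j$ ($j\circ\rho=\mathrm{id}$, $\rho(E(S))\subseteq E(A*_\Lambda S)$), the induced structure is $(\alpha_\rho,\lambda_\rho,f_\rho)$: $\alpha_\rho=i^{-1}\circ\rho|_{E(S)}$, $(\lambda_\rho)_s(a)=i^{-1}(\rho(s)i(a)\rho(s)^{-1})$, $f_\rho(s,t)$ the unique element of $A_{\alpha_\rho(stt^{-1}s^{-1})}$ with $\rho(s)\rho(t)=i(f_\rho(s,t))\rho(st)$. *)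

theory Defs
  imports Main
begin

definition inv_sg :: "'a set \<Rightarrow> ('a \<Rightarrow> 'a \<Rightarrow> 'a) \<Rightarrow> bool" where
  "inv_sg C m \<longleftrightarrow>
     (\<forall>x\<in>C. \<forall>y\<in>C. m x y \<in> C) \<and>
     (\<forall>x\<in>C. \<forall>y\<in>C. \<forall>z\<in>C. m (m x y) z = m x (m y z)) \<and>
     (\<forall>x\<in>C. \<exists>!y. y \<in> C \<and> m (m x y) x = x \<and> m (m y x) y = y)"

definition sinv :: "'a set \<Rightarrow> ('a \<Rightarrow> 'a \<Rightarrow> 'a) \<Rightarrow> 'a \<Rightarrow> 'a" where
  "sinv C m x = (THE y. y \<in> C \<and> m (m x y) x = x \<and> m (m y x) y = y)"

definition idem :: "'a set \<Rightarrow> ('a \<Rightarrow> 'a \<Rightarrow> 'a) \<Rightarrow> 'a set" where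
  "idem C m = {e \<in> C. m e e = e}"

definition semilattice_of_groups :: "('a \<Rightarrow> 'a \<Rightarrow> 'a) \<Rightarrow> bool" where
  "semilattice_of_groups m \<longleftrightarrow> inv_sg UNIV m \<and>
     (\<forall>e \<in> idem UNIV m. \<forall>a. m e a = m a e)"

definition grp_comp :: "('a \<Rightarrow> 'a \<Rightarrow> 'a) \<Rightarrow> 'a \<Rightarrow> 'a set" where
  "grp_comp m e = {a. m a (sinv UNIV m a) = e \<and> m (sinv UNIV m a) a = e}"

definition endo :: "('a \<Rightarrow> 'a \<Rightarrow> 'a) \<Rightarrow> ('a \<Rightarrow> 'a) \<Rightarrow> bool" where
  "endo m \<phi> \<longleftrightarrow> (\<forall>a b. \<phi> (m a b) = m (\<phi> a) (\<phi> b))"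

definition is_identity_of :: "('a \<Rightarrow> 'a \<Rightarrow> 'a) \<Rightarrow> 'a \<Rightarrow> 'a set \<Rightarrow> bool" where
  "is_identity_of m e X \<longleftrightarrow> e \<in> X \<and> (\<forall>x\<in>X. m e x = x \<and> m x e = x)"

definition rel_invertible :: "('a \<Rightarrow> 'a \<Rightarrow> 'a) \<Rightarrow> ('a \<Rightarrow> 'a) \<Rightarrow> bool" where
  "rel_invertible m \<phi> \<longleftrightarrow> endo m \<phi> \<and>
     (\<exists>\<psi> e. endo m \<psi> \<and> e \<in> idem UNIV m \<and>
        (\<forall>a. \<psi> (\<phi> a) = m e a) \<and>
        (\<forall>a. \<phi> (\<psi> a) = m (\<phi> e) a) \<and>
        is_identity_of m e (range \<psi>) \<and>
        is_identity_of m (\<phi> e) (range \<phi>))"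

definition twisted_module ::
  "('s \<Rightarrow> 's \<Rightarrow> 's) \<Rightarrow> ('a \<Rightarrow> 'a \<Rightarrow> 'a) \<Rightarrow> ('s \<Rightarrow> 'a) \<Rightarrow> ('s \<Rightarrow> 'a \<Rightarrow> 'a)
   \<Rightarrow> ('s \<Rightarrow> 's \<Rightarrow> 'a) \<Rightarrow> bool" where
  "twisted_module mS mA \<alpha> lam f \<longleftrightarrow>
     bij_betw \<alpha> (idem UNIV mS) (idem UNIV mA) \<and>
     (\<forall>e\<in>idem UNIV mS. \<forall>e'\<in>idem UNIV mS. \<alpha> (mS e e') = mA (\<alpha> e) (\<alpha> e')) \<and>
     (\<forall>s. rel_invertible mA (lam s)) \<and>
     (\<forall>s t. f s t \<in> grp_comp mA
        (\<alpha> (mS (mS (mS s t) (sinv UNIV mS t)) (sinv UNIV mS s)))) \<and>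
     (\<forall>e\<in>idem UNIV mS. \<forall>a. lam e a = mA (\<alpha> e) a) \<and>
     (\<forall>s. \<forall>e\<in>idem UNIV mS. lam s (\<alpha> e) = \<alpha> (mS (mS s e) (sinv UNIV mS s))) \<and>
     (\<forall>s t a. lam s (lam t a) = mA (mA (f s t) (lam (mS s t) a)) (sinv UNIV mA (f s t))) \<and>
     (\<forall>s. \<forall>e\<in>idem UNIV mS.
        f (mS s e) e = \<alpha> (mS (mS s e) (sinv UNIV mS s)) \<and>
        f e (mS e s) = \<alpha> (mS (mS e s) (sinv UNIV mS s))) \<and>
     (\<forall>s t u. mA (lam s (f t u)) (f s (mS t u)) = mA (f s t) (f (mS s t) u))"

definition sieben :: "('s \<Rightarrow> 's \<Rightarrow> 's) \<Rightarrow> ('a \<Rightarrow> 'a \<Rightarrow> 'a) \<Rightarrow> ('s \<Rightarrow> 'a) \<Rightarrow> ('s \<Rightarrow> 'a \<Rightarrow> 'a)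
   \<Rightarrow> ('s \<Rightarrow> 's \<Rightarrow> 'a) \<Rightarrow> bool" where
  "sieben mS mA \<alpha> lam f \<longleftrightarrow> twisted_module mS mA \<alpha> lam f \<and>
     (\<forall>s. \<forall>e\<in>idem UNIV mS.
        f s e = \<alpha> (mS (mS s e) (sinv UNIV mS s)) \<and>
        f e s = \<alpha> (mS (mS e s) (sinv UNIV mS s)))"

section \<open>Crossed product A *_Lambda S; the element a delta_s is the pair (a, s)\<close>

definition cp_carrier :: "('s \<Rightarrow> 's \<Rightarrow> 's) \<Rightarrow> ('a \<Rightarrow> 'a \<Rightarrow> 'a) \<Rightarrow> ('s \<Rightarrow> 'a) \<Rightarrow> ('a \<times> 's) set" where
  "cp_carrier mS mA \<alpha> = {(a, s). mA a (sinv UNIV mA a) = \<alpha> (mS s (sinv UNIV mS s))}"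

definition cp_mult :: "('s \<Rightarrow> 's \<Rightarrow> 's) \<Rightarrow> ('a \<Rightarrow> 'a \<Rightarrow> 'a) \<Rightarrow> ('s \<Rightarrow> 'a \<Rightarrow> 'a)
   \<Rightarrow> ('s \<Rightarrow> 's \<Rightarrow> 'a) \<Rightarrow> 'a \<times> 's \<Rightarrow> 'a \<times> 's \<Rightarrow> 'a \<times> 's" where
  "cp_mult mS mA lam f x y =
     (mA (mA (fst x) (lam (snd x) (fst y))) (f (snd x) (snd y)), mS (snd x) (snd y))"

definition cp_i :: "('s \<Rightarrow> 's \<Rightarrow> 's) \<Rightarrow> ('a \<Rightarrow> 'a \<Rightarrow> 'a) \<Rightarrow> ('s \<Rightarrow> 'a) \<Rightarrow> 'a \<Rightarrow> 'a \<times> 's" where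
  "cp_i mS mA \<alpha> a = (a, inv_into (idem UNIV mS) \<alpha> (mA a (sinv UNIV mA a)))"

definition cp_j :: "'a \<times> 's \<Rightarrow> 's" where
  "cp_j x = snd x"

definition is_transversal :: "('s \<Rightarrow> 's \<Rightarrow> 's) \<Rightarrow> ('a \<Rightarrow> 'a \<Rightarrow> 'a) \<Rightarrow> ('s \<Rightarrow> 'a)
   \<Rightarrow> ('s \<Rightarrow> 'a \<Rightarrow> 'a) \<Rightarrow> ('s \<Rightarrow> 's \<Rightarrow> 'a) \<Rightarrow> ('s \<Rightarrow> 'a \<times> 's) \<Rightarrow> bool" where
  "is_transversal mS mA \<alpha> lam f \<rho> \<longleftrightarrow>
     (\<forall>s. \<rho> s \<in> cp_carrier mS mA \<alpha>) \<and>
     (\<forall>s. cp_j (\<rho> s) = s) \<and>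
     (\<forall>e\<in>idem UNIV mS. \<rho> e \<in> idem (cp_carrier mS mA \<alpha>) (cp_mult mS mA lam f))"

definition i_inv :: "('s \<Rightarrow> 's \<Rightarrow> 's) \<Rightarrow> ('a \<Rightarrow> 'a \<Rightarrow> 'a) \<Rightarrow> ('s \<Rightarrow> 'a) \<Rightarrow> 'a \<times> 's \<Rightarrow> 'a" where
  "i_inv mS mA \<alpha> x = (THE a. cp_i mS mA \<alpha> a = x)"

definition induced_alpha :: "('s \<Rightarrow> 's \<Rightarrow> 's) \<Rightarrow> ('a \<Rightarrow> 'a \<Rightarrow> 'a) \<Rightarrow> ('s \<Rightarrow> 'a)
   \<Rightarrow> ('s \<Rightarrow> 'a \<times> 's) \<Rightarrow> 's \<Rightarrow> 'a" where
  "induced_alpha mS mA \<alpha> \<rho> e = i_inv mS mA \<alpha> (\<rho> e)"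

definition induced_lambda :: "('s \<Rightarrow> 's \<Rightarrow> 's) \<Rightarrow> ('a \<Rightarrow> 'a \<Rightarrow> 'a) \<Rightarrow> ('s \<Rightarrow> 'a)
   \<Rightarrow> ('s \<Rightarrow> 'a \<Rightarrow> 'a) \<Rightarrow> ('s \<Rightarrow> 's \<Rightarrow> 'a) \<Rightarrow> ('s \<Rightarrow> 'a \<times> 's) \<Rightarrow> 's \<Rightarrow> 'a \<Rightarrow> 'a" where
  "induced_lambda mS mA \<alpha> lam f \<rho> s a =
     i_inv mS mA \<alpha>
       (cp_mult mS mA lam f (cp_mult mS mA lam f (\<rho> s) (cp_i mS mA \<alpha> a))
          (sinv (cp_carrier mS mA \<alpha>) (cp_mult mS mA lam f) (\<rho> s)))"

definition induced_f :: "('s \<Rightarrow> 's \<Rightarrow> 's) \<Rightarrow> ('a \<Rightarrow> 'a \<Rightarrow> 'a) \<Rightarrow> ('s \<Rightarrow> 'a)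
   \<Rightarrow> ('s \<Rightarrow> 'a \<Rightarrow> 'a) \<Rightarrow> ('s \<Rightarrow> 's \<Rightarrow> 'a) \<Rightarrow> ('s \<Rightarrow> 'a \<times> 's) \<Rightarrow> 's \<Rightarrow> 's \<Rightarrow> 'a" where
  "induced_f mS mA \<alpha> lam f \<rho> s t =
     (THE a. a \<in> grp_comp mA (induced_alpha mS mA \<alpha> \<rho>
                 (mS (mS (mS s t) (sinv UNIV mS t)) (sinv UNIV mS s))) \<and>
             cp_mult mS mA lam f (\<rho> s) (\<rho> t) =
               cp_mult mS mA lam f (cp_i mS mA \<alpha> a) (\<rho> (mS s t)))"

end

theory Submission
  imports Defs
begin

text \<open>
  In the crossed product, \<open>\<rho>(s) = \<alpha>(ss\<^sup>-\<^sup>1)\<delta>\<^sub>s\<close> has inverse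
  \<open>f(s\<^sup>-\<^sup>1,s)\<^sup>-\<^sup>1\<delta>\<^bsub>s\<^sup>-\<^sup>1\<^esub>\<close>: Sieben's normalisation turns the cocycle identity for
  \<open>(s, s\<^sup>-\<^sup>1, s)\<close> into \<open>\<lambda>\<^sub>s(f(s\<^sup>-\<^sup>1,s)) = f(s,s\<^sup>-\<^sup>1)\<close>. The induced data are then read off
  from explicit products: \<open>\<rho>(e) = i(\<alpha>(e))\<close> gives \<open>\<alpha>\<^sub>\<rho> = \<alpha>\<close>;
  \<open>\<rho>(s)\<rho>(t) = f(s,t)\<delta>\<^bsub>st\<^esub> = i(f(s,t))\<rho>(st)\<close> gives \<open>f\<^sub>\<rho> = f\<close>; and for
  \<open>a \<in> A\<^bsub>\<alpha>(e)\<^esub>\<close> one gets \<open>\<rho>(s)i(a)\<rho>(s)\<^sup>-\<^sup>1 = \<lambda>\<^sub>s(a)\<delta>\<^bsub>ses\<^sup>-\<^sup>1\<^esub> = i(\<lambda>\<^sub>s(a))\<close>, using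
  that \<open>\<lambda>\<^bsub>se\<^esub>\<close> and \<open>\<lambda>\<^sub>s\<close> agree after multiplication by \<open>\<alpha>(ses\<^sup>-\<^sup>1)\<close> and that
  \<open>f(se,s\<^sup>-\<^sup>1) = f(s,s\<^sup>-\<^sup>1)\<alpha>(ses\<^sup>-\<^sup>1)\<close>, both consequences of Sieben's conditions.
\<close>

locale inverse_semigroup =
  fixes m :: "'a \<Rightarrow> 'a \<Rightarrow> 'a" (infixl "\<cdot>" 70)
  assumes inv_sg: "inv_sg UNIV m"
begin

abbreviation iv :: "'a \<Rightarrow> 'a" where "iv x \<equiv> sinv UNIV m x"

lemma assoc: "(x \<cdot> y) \<cdot> z = x \<cdot> (y \<cdot> z)"
  using inv_sg unfolding inv_sg_def by blast

lemma ex1_inverse: "\<exists>!y. y \<in> UNIV \<and> (x \<cdot> y) \<cdot> x = x \<and> (y \<cdot> x) \<cdot> y = y"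
  using inv_sg unfolding inv_sg_def by blast

lemma mult_inv_mult [simp]: "x \<cdot> (iv x \<cdot> x) = x"
  and inv_mult_inv [simp]: "iv x \<cdot> (x \<cdot> iv x) = iv x"
  using theI'[OF ex1_inverse[of x]] unfolding sinv_def by (simp_all add: assoc)

lemma mult_inv_mult_right [simp]: "x \<cdot> (iv x \<cdot> (x \<cdot> z)) = x \<cdot> z"
  and inv_mult_inv_right [simp]: "iv x \<cdot> (x \<cdot> (iv x \<cdot> z)) = iv x \<cdot> z"
  by (metis assoc mult_inv_mult, metis assoc inv_mult_inv)

lemma inverse_unique: "x \<cdot> (y \<cdot> x) = x \<Longrightarrow> y \<cdot> (x \<cdot> y) = y \<Longrightarrow> y = iv x"
  using ex1_inverse[of x] mult_inv_mult[of x] inv_mult_inv[of x] by (metis assoc UNIV_I)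

lemma inv_inv [simp]: "iv (iv x) = x"
  by (metis inverse_unique mult_inv_mult inv_mult_inv)

lemma idempotent_inv: "e \<cdot> e = e \<Longrightarrow> iv e = e"
  by (metis inverse_unique assoc)

lemma idem_UNIV: "idem UNIV m = {e. e \<cdot> e = e}"
  unfolding idem_def by auto

lemma mult_inv_idempotent: "(x \<cdot> iv x) \<cdot> (x \<cdot> iv x) = x \<cdot> iv x"
  and inv_mult_idempotent: "(iv x \<cdot> x) \<cdot> (iv x \<cdot> x) = iv x \<cdot> x"
  by (simp_all add: assoc)

lemma idempotent_mult_idempotent:
  assumes e: "e \<cdot> e = e" and f: "f \<cdot> f = f"
  shows "(e \<cdot> f) \<cdot> (e \<cdot> f) = e \<cdot> f"
proof -
  define x where "x = iv (e \<cdot> f)"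
  have e_left: "e \<cdot> (e \<cdot> z) = e \<cdot> z" and f_left: "f \<cdot> (f \<cdot> z) = f \<cdot> z" for z
    using e f by (metis assoc)+
  have efx: "e \<cdot> (f \<cdot> (x \<cdot> (e \<cdot> f))) = e \<cdot> f" and xef: "x \<cdot> (e \<cdot> (f \<cdot> x)) = x"
    using mult_inv_mult[of "e \<cdot> f"] inv_mult_inv[of "e \<cdot> f"] unfolding x_def
    by (simp_all only: assoc)
  txt \<open>The element \<open>f x e\<close> is also an inverse of \<open>e f\<close>, hence equals \<open>x\<close>.\<close>
  have fxe: "f \<cdot> (x \<cdot> e) = x"
    unfolding x_def
  proof (rule inverse_unique)
    show "e \<cdot> f \<cdot> (f \<cdot> (iv (e \<cdot> f) \<cdot> e) \<cdot> (e \<cdot> f)) = e \<cdot> f"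
      using efx unfolding x_def by (simp add: assoc e_left f_left)
    have "f \<cdot> (x \<cdot> e) \<cdot> (e \<cdot> f \<cdot> (f \<cdot> (x \<cdot> e))) = f \<cdot> ((x \<cdot> (e \<cdot> (f \<cdot> x))) \<cdot> e)"
      by (simp add: assoc e_left f_left e f)
    then show "f \<cdot> (iv (e \<cdot> f) \<cdot> e) \<cdot> (e \<cdot> f \<cdot> (f \<cdot> (iv (e \<cdot> f) \<cdot> e))) = f \<cdot> (iv (e \<cdot> f) \<cdot> e)"
      using xef unfolding x_def by simp
  qed
  have xx: "x \<cdot> x = x"
  proof -
    have "x \<cdot> x = f \<cdot> ((x \<cdot> (e \<cdot> (f \<cdot> x))) \<cdot> e)"
      by (subst (1 2) fxe[symmetric]) (simp add: assoc)
    also have "\<dots> = x" using xef fxe by (simp add: assoc)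
    finally show ?thesis .
  qed
  have "e \<cdot> f = x"
    using idempotent_inv[OF xx] unfolding x_def by simp
  with xx show ?thesis by simp
qed

lemma idempotents_commute:
  assumes e: "e \<cdot> e = e" and f: "f \<cdot> f = f"
  shows "e \<cdot> f = f \<cdot> e"
proof -
  have ef: "(e \<cdot> f) \<cdot> (e \<cdot> f) = e \<cdot> f" and fe: "(f \<cdot> e) \<cdot> (f \<cdot> e) = f \<cdot> e"
    using idempotent_mult_idempotent e f by blast+
  have e_left: "e \<cdot> (e \<cdot> z) = e \<cdot> z" and f_left: "f \<cdot> (f \<cdot> z) = f \<cdot> z" for z
    using e f by (metis assoc)+
  have "f \<cdot> e = iv (e \<cdot> f)"
    by (rule inverse_unique) (use ef fe in \<open>simp_all add: assoc e_left f_left\<close>)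
  then show ?thesis using idempotent_inv[OF ef] by simp
qed

lemma inv_mult_distrib: "iv (x \<cdot> y) = iv y \<cdot> iv x"
proof -
  have c: "(y \<cdot> iv y) \<cdot> (iv x \<cdot> x) = (iv x \<cdot> x) \<cdot> (y \<cdot> iv y)"
    by (rule idempotents_commute[OF mult_inv_idempotent inv_mult_idempotent])
  show ?thesis
  proof (rule inverse_unique[symmetric])
    have "x \<cdot> y \<cdot> (iv y \<cdot> iv x \<cdot> (x \<cdot> y)) = x \<cdot> ((y \<cdot> iv y) \<cdot> (iv x \<cdot> x)) \<cdot> y"
      by (simp add: assoc)
    also have "\<dots> = x \<cdot> y" by (simp only: c) (simp add: assoc)
    finally show "x \<cdot> y \<cdot> (iv y \<cdot> iv x \<cdot> (x \<cdot> y)) = x \<cdot> y" .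
    have "iv y \<cdot> iv x \<cdot> (x \<cdot> y \<cdot> (iv y \<cdot> iv x)) = iv y \<cdot> ((iv x \<cdot> x) \<cdot> (y \<cdot> iv y)) \<cdot> iv x"
      by (simp add: assoc)
    also have "\<dots> = iv y \<cdot> iv x" by (simp only: c[symmetric]) (simp add: assoc)
    finally show "iv y \<cdot> iv x \<cdot> (x \<cdot> y \<cdot> (iv y \<cdot> iv x)) = iv y \<cdot> iv x" .
  qed
qed

lemma conj_idempotent:
  assumes e: "e \<cdot> e = e"
  shows "(x \<cdot> e \<cdot> iv x) \<cdot> (x \<cdot> e \<cdot> iv x) = x \<cdot> e \<cdot> iv x"
proof -
  have c: "e \<cdot> (iv x \<cdot> x) = (iv x \<cdot> x) \<cdot> e"
    by (rule idempotents_commute[OF e inv_mult_idempotent])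
  have "(x \<cdot> e \<cdot> iv x) \<cdot> (x \<cdot> e \<cdot> iv x) = x \<cdot> (e \<cdot> (iv x \<cdot> x)) \<cdot> e \<cdot> iv x"
    by (simp add: assoc)
  also have "\<dots> = x \<cdot> e \<cdot> iv x"
    by (simp only: c) (simp add: assoc e flip: assoc[of e e])
  finally show ?thesis .
qed

lemma inv_mult_conj_idempotent:
  assumes e: "e \<cdot> e = e"
  shows "iv x \<cdot> (x \<cdot> e \<cdot> iv x) = e \<cdot> iv x"
proof -
  have "iv x \<cdot> (x \<cdot> e \<cdot> iv x) = (iv x \<cdot> x) \<cdot> e \<cdot> iv x" by (simp add: assoc)
  also have "\<dots> = e \<cdot> (iv x \<cdot> x) \<cdot> iv x"
    by (simp only: idempotents_commute[OF inv_mult_idempotent e])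
  also have "\<dots> = e \<cdot> iv x" by (simp add: assoc)
  finally show ?thesis .
qed

lemma endo_inv:
  assumes "endo m \<phi>"
  shows "\<phi> (iv a) = iv (\<phi> a)"
proof (rule inverse_unique)
  have hom: "\<phi> (x \<cdot> y) = \<phi> x \<cdot> \<phi> y" for x y
    using assms unfolding endo_def by blast
  show "\<phi> a \<cdot> (\<phi> (iv a) \<cdot> \<phi> a) = \<phi> a" by (metis hom mult_inv_mult)
  show "\<phi> (iv a) \<cdot> (\<phi> a \<cdot> \<phi> (iv a)) = \<phi> (iv a)" by (metis hom inv_mult_inv)
qed

end

locale clifford_semigroup = inverse_semigroup +
  assumes idempotent_central: "e \<cdot> e = e \<Longrightarrow> e \<cdot> a = a \<cdot> e"
begin

lemma mult_inv_commute: "x \<cdot> iv x = iv x \<cdot> x"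
proof -
  let ?e = "x \<cdot> iv x" and ?f = "iv x \<cdot> x"
  have x_f: "x \<cdot> ?f = ?f \<cdot> x" and iv_e: "iv x \<cdot> ?e = ?e \<cdot> iv x"
    using idempotent_central[OF inv_mult_idempotent, of x x]
      idempotent_central[OF mult_inv_idempotent, of x "iv x"] by simp_all
  have "?e = (x \<cdot> ?f) \<cdot> iv x" by simp
  also have "\<dots> = ?f \<cdot> ?e" by (simp only: x_f assoc)
  finally have e_eq: "?e = ?f \<cdot> ?e" .
  have "?f = (iv x \<cdot> ?e) \<cdot> x" by (simp add: assoc)
  also have "\<dots> = ?e \<cdot> ?f" by (simp only: iv_e assoc)
  finally have f_eq: "?f = ?e \<cdot> ?f" .
  show ?thesis
    using e_eq f_eq idempotents_commute[OF mult_inv_idempotent inv_mult_idempotent] by metis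
qed

lemma grp_comp_iff: "a \<in> grp_comp m h \<longleftrightarrow> a \<cdot> iv a = h"
  unfolding grp_comp_def using mult_inv_commute by auto

context
  fixes a h
  assumes a: "a \<cdot> iv a = h"
begin

lemma grp_unit_left: "h \<cdot> a = a"
  using a by (metis assoc mult_inv_mult)

lemma grp_unit_right: "a \<cdot> h = a"
  using a by (metis mult_inv_commute mult_inv_mult)

lemma grp_inv_mult: "iv a \<cdot> a = h"
  using a by (metis mult_inv_commute)

lemma grp_comp_inv: "iv a \<cdot> iv (iv a) = h"
  using grp_inv_mult by simp

end

end

lemma semilattice_of_groups_clifford:
  assumes "semilattice_of_groups m"
  shows "clifford_semigroup m"
  using assms unfolding semilattice_of_groups_def clifford_semigroup_def
    clifford_semigroup_axioms_def inverse_semigroup_def idem_def by blast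

locale sieben_module = S: inverse_semigroup mS + A: clifford_semigroup mA
  for mS :: "'s \<Rightarrow> 's \<Rightarrow> 's" (infixl "\<star>" 70) and mA :: "'a \<Rightarrow> 'a \<Rightarrow> 'a" (infixl "\<cdot>" 70) +
  fixes \<alpha> :: "'s \<Rightarrow> 'a" and lam :: "'s \<Rightarrow> 'a \<Rightarrow> 'a" and f :: "'s \<Rightarrow> 's \<Rightarrow> 'a"
  assumes sieben: "sieben mS mA \<alpha> lam f"
begin

abbreviation "si \<equiv> S.iv"
abbreviation "ai \<equiv> A.iv"

lemma twisted_module: "twisted_module mS mA \<alpha> lam f"
  using sieben unfolding sieben_def by blast

lemma alpha_bij: "bij_betw \<alpha> {e. e \<star> e = e} {h. h \<cdot> h = h}"
  using twisted_module unfolding twisted_module_def S.idem_UNIV A.idem_UNIV by blast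

lemma alpha_idempotent: "e \<star> e = e \<Longrightarrow> \<alpha> e \<cdot> \<alpha> e = \<alpha> e"
  using alpha_bij unfolding bij_betw_def by blast

lemma alpha_mult: "e \<star> e = e \<Longrightarrow> e' \<star> e' = e' \<Longrightarrow> \<alpha> (e \<star> e') = \<alpha> e \<cdot> \<alpha> e'"
  using twisted_module unfolding twisted_module_def S.idem_UNIV by blast

lemma lam_endo: "endo mA (lam s)"
  using twisted_module unfolding twisted_module_def rel_invertible_def by blast

lemma lam_mult: "lam s (a \<cdot> b) = lam s a \<cdot> lam s b"
  using lam_endo unfolding endo_def by blast

lemma lam_inv: "lam s (ai a) = ai (lam s a)"
  by (rule A.endo_inv[OF lam_endo])

lemma lam_grp_comp: "a \<cdot> ai a = h \<Longrightarrow> lam s a \<cdot> ai (lam s a) = lam s h"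
  using lam_mult[of s a "ai a"] lam_inv[of s a] by simp

lemma lam_idempotent: "e \<star> e = e \<Longrightarrow> lam e a = \<alpha> e \<cdot> a"
  using twisted_module unfolding twisted_module_def S.idem_UNIV by blast

lemma lam_alpha: "e \<star> e = e \<Longrightarrow> lam s (\<alpha> e) = \<alpha> (s \<star> e \<star> si s)"
  using twisted_module unfolding twisted_module_def S.idem_UNIV by blast

lemma lam_lam: "lam s (lam t a) = f s t \<cdot> lam (s \<star> t) a \<cdot> ai (f s t)"
  using twisted_module unfolding twisted_module_def by blast

lemma cocycle: "lam s (f t u) \<cdot> f s (t \<star> u) = f s t \<cdot> f (s \<star> t) u"
  using twisted_module unfolding twisted_module_def by blast

lemma f_grp_comp: "f s t \<cdot> ai (f s t) = \<alpha> ((s \<star> t) \<star> si (s \<star> t))"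
proof -
  have "f s t \<in> grp_comp mA (\<alpha> (s \<star> t \<star> si t \<star> si s))"
    using twisted_module unfolding twisted_module_def by blast
  then show ?thesis
    unfolding A.grp_comp_iff by (simp add: S.inv_mult_distrib S.assoc)
qed

lemma f_idempotent_right: "e \<star> e = e \<Longrightarrow> f s e = \<alpha> (s \<star> e \<star> si s)"
  using sieben unfolding sieben_def S.idem_UNIV by blast

lemma f_idempotent_left: "e \<star> e = e \<Longrightarrow> f e s = \<alpha> (e \<star> s \<star> si s)"
  using sieben unfolding sieben_def S.idem_UNIV by blast

lemma f_inv_grp_comp: "f s (si s) \<cdot> ai (f s (si s)) = \<alpha> (s \<star> si s)"
  using f_grp_comp[of s "si s"] S.idempotent_inv[OF S.mult_inv_idempotent[of s]]
    S.mult_inv_idempotent[of s] by simp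

lemma lam_f_inv: "lam s (f (si s) s) = f s (si s)"
proof -
  have F: "f (si s) s \<cdot> ai (f (si s) s) = \<alpha> (si s \<star> s)"
    using f_inv_grp_comp[of "si s"] by simp
  have lam_F: "lam s (f (si s) s) \<cdot> ai (lam s (f (si s) s)) = \<alpha> (s \<star> si s)"
    using lam_grp_comp[OF F, of s] lam_alpha[OF S.inv_mult_idempotent[of s], of s]
    by (simp add: S.assoc)
  have "lam s (f (si s) s) \<cdot> f s (si s \<star> s) = f s (si s) \<cdot> f (s \<star> si s) s"
    by (rule cocycle)
  moreover have "f s (si s \<star> s) = \<alpha> (s \<star> si s)"
    using f_idempotent_right[OF S.inv_mult_idempotent, of s s] by (simp add: S.assoc)
  moreover have "f (s \<star> si s) s = \<alpha> (s \<star> si s)"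
    using f_idempotent_left[OF S.mult_inv_idempotent, of s s] by (simp add: S.assoc)
  ultimately show ?thesis
    using A.grp_unit_right[OF lam_F] A.grp_unit_right[OF f_inv_grp_comp] by simp
qed

lemma lam_inj_on_grp_comp:
  assumes c: "c \<cdot> ai c = \<alpha> (si s \<star> s)" and d: "d \<cdot> ai d = \<alpha> (si s \<star> s)"
    and eq: "lam s c = lam s d"
  shows "c = d"
proof -
  let ?F = "f (si s) s"
  have F: "?F \<cdot> ai ?F = \<alpha> (si s \<star> s)"
    using f_inv_grp_comp[of "si s"] by simp
  txt \<open>On the group component of \<open>\<alpha>(s\<^sup>-\<^sup>1s)\<close>, \<open>\<lambda>\<^bsub>s\<^sup>-\<^sup>1\<^esub>\<lambda>\<^sub>s\<close> is conjugation by \<open>f(s\<^sup>-\<^sup>1,s)\<close>.\<close>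
  have recover: "ai ?F \<cdot> lam (si s) (lam s x) \<cdot> ?F = x" if x: "x \<cdot> ai x = \<alpha> (si s \<star> s)" for x
  proof -
    have "lam (si s) (lam s x) = ?F \<cdot> x \<cdot> ai ?F"
      using lam_lam[of "si s" s x] lam_idempotent[OF S.inv_mult_idempotent] A.grp_unit_left[OF x]
      by simp
    then have "ai ?F \<cdot> lam (si s) (lam s x) \<cdot> ?F = (ai ?F \<cdot> ?F) \<cdot> x \<cdot> (ai ?F \<cdot> ?F)"
      by (simp add: A.assoc)
    also have "\<dots> = x"
      using A.grp_inv_mult[OF F] A.grp_unit_left[OF x] A.grp_unit_right[OF x] by simp
    finally show ?thesis .
  qed
  show ?thesis using recover[OF c] recover[OF d] eq by metis
qed

lemma cp_i_eq: "a \<cdot> ai a = \<alpha> e \<Longrightarrow> e \<star> e = e \<Longrightarrow> cp_i mS mA \<alpha> a = (a, e)"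
  using alpha_bij unfolding cp_i_def bij_betw_def S.idem_UNIV by (simp add: inv_into_f_f)

lemma cp_i_obtain:
  obtains e where "e \<star> e = e" and "\<alpha> e = a \<cdot> ai a" and "cp_i mS mA \<alpha> a = (a, e)"
proof -
  have "a \<cdot> ai a \<in> \<alpha> ` {e. e \<star> e = e}"
    using alpha_bij A.mult_inv_idempotent unfolding bij_betw_def by blast
  then obtain e where "e \<star> e = e" and "\<alpha> e = a \<cdot> ai a" by auto
  with cp_i_eq that show ?thesis by metis
qed

lemma i_inv_cp_i: "i_inv mS mA \<alpha> (cp_i mS mA \<alpha> a) = a"
  unfolding i_inv_def by (rule the_equality) (auto simp: cp_i_def)

lemma i_inv_eq: "a \<cdot> ai a = \<alpha> e \<Longrightarrow> e \<star> e = e \<Longrightarrow> i_inv mS mA \<alpha> (a, e) = a"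
  using i_inv_cp_i cp_i_eq by metis

abbreviation \<rho> :: "'s \<Rightarrow> 'a \<times> 's" where "\<rho> s \<equiv> (\<alpha> (s \<star> si s), s)"

lemma \<rho>_in_cp_carrier: "\<rho> s \<in> cp_carrier mS mA \<alpha>"
  using A.idempotent_inv alpha_idempotent[OF S.mult_inv_idempotent[of s]]
  unfolding cp_carrier_def by simp

lemma is_transversal_\<rho>: "is_transversal mS mA \<alpha> lam f \<rho>"
  unfolding is_transversal_def
proof (intro conjI allI ballI)
  fix s
  show "\<rho> s \<in> cp_carrier mS mA \<alpha>" by (rule \<rho>_in_cp_carrier)
  show "cp_j (\<rho> s) = s" by (simp add: cp_j_def)
next
  fix e assume "e \<in> idem UNIV mS"
  then have e: "e \<star> e = e" by (simp add: S.idem_UNIV)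
  show "\<rho> e \<in> idem (cp_carrier mS mA \<alpha>) (cp_mult mS mA lam f)"
    unfolding idem_def using \<rho>_in_cp_carrier[of e]
    by (simp add: cp_mult_def S.idempotent_inv e lam_idempotent f_idempotent_right
        alpha_idempotent A.assoc)
qed

lemma induced_alpha_\<rho>: "e \<star> e = e \<Longrightarrow> induced_alpha mS mA \<alpha> \<rho> e = \<alpha> e"
  unfolding induced_alpha_def
  using i_inv_eq[of "\<alpha> e" e] by (simp add: S.idempotent_inv alpha_idempotent A.idempotent_inv)

lemma induced_f_\<rho>: "induced_f mS mA \<alpha> lam f \<rho> s t = f s t"
proof -
  let ?x = "s \<star> t"
  let ?G = "?x \<star> si ?x"
  have G: "?G \<star> ?G = ?G" by (rule S.mult_inv_idempotent)
  have G_eq: "s \<star> t \<star> si t \<star> si s = ?G" by (simp add: S.inv_mult_distrib S.assoc)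
  have f: "f s t \<cdot> ai (f s t) = \<alpha> ?G" by (rule f_grp_comp)
  have \<rho>_mult_\<rho>: "cp_mult mS mA lam f (\<rho> s) (\<rho> t) = (f s t, ?x)"
  proof -
    have "lam s (\<alpha> (t \<star> si t)) = \<alpha> ?G"
      using lam_alpha[OF S.mult_inv_idempotent[of t], of s] G_eq by (simp add: S.assoc)
    moreover have "\<alpha> (s \<star> si s) \<cdot> \<alpha> ?G = \<alpha> ?G"
      using alpha_mult[OF S.mult_inv_idempotent[of s] G] by (simp add: S.inv_mult_distrib S.assoc)
    ultimately show ?thesis
      unfolding cp_mult_def using A.grp_unit_left[OF f] by simp
  qed
  have cp_i_mult_\<rho>: "cp_mult mS mA lam f (cp_i mS mA \<alpha> a) (\<rho> ?x) = (a, ?x)"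
    if a: "a \<cdot> ai a = \<alpha> ?G" for a
  proof -
    have "?G \<star> ?x = ?x" by (metis S.assoc S.mult_inv_mult)
    moreover have "f ?G ?x = \<alpha> ?G"
      using f_idempotent_left[OF G, of ?x] G by (simp add: S.assoc)
    ultimately show ?thesis
      unfolding cp_mult_def cp_i_eq[OF a G]
      using lam_idempotent[OF G] alpha_idempotent[OF G] A.grp_unit_right[OF a] by simp
  qed
  show ?thesis
    unfolding induced_f_def G_eq induced_alpha_\<rho>[OF G]
    using f \<rho>_mult_\<rho> cp_i_mult_\<rho> by (auto simp: A.grp_comp_iff)
qed

lemma \<rho>_mult_inverse:
  "cp_mult mS mA lam f (\<rho> s) (ai (f (si s) s), si s) = (\<alpha> (s \<star> si s), s \<star> si s)"
proof -
  have "lam s (ai (f (si s) s)) = ai (f s (si s))"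
    using lam_inv[of s "f (si s) s"] lam_f_inv[of s] by simp
  then show ?thesis
    unfolding cp_mult_def
    using A.grp_unit_left[OF A.grp_comp_inv[OF f_inv_grp_comp]] A.grp_inv_mult[OF f_inv_grp_comp]
    by simp
qed

lemma inverse_mult_\<rho>:
  "cp_mult mS mA lam f (ai (f (si s) s), si s) (\<rho> s) = (\<alpha> (si s \<star> s), si s \<star> s)"
proof -
  have F: "f (si s) s \<cdot> ai (f (si s) s) = \<alpha> (si s \<star> s)"
    using f_inv_grp_comp[of "si s"] by simp
  have "lam (si s) (\<alpha> (s \<star> si s)) = \<alpha> (si s \<star> s)"
    using lam_alpha[OF S.mult_inv_idempotent[of s], of "si s"] by (simp add: S.assoc)
  then show ?thesis
    unfolding cp_mult_def
    using A.grp_unit_right[OF A.grp_comp_inv[OF F]] A.grp_inv_mult[OF F] by simp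
qed

lemma cp_inverse_of_\<rho>_unique:
  assumes z: "z \<in> cp_carrier mS mA \<alpha>"
    and zx: "cp_mult mS mA lam f (cp_mult mS mA lam f (\<rho> s) z) (\<rho> s) = \<rho> s"
    and xz: "cp_mult mS mA lam f (cp_mult mS mA lam f z (\<rho> s)) z = z"
  shows "z = (ai (f (si s) s), si s)"
proof -
  let ?E = "s \<star> si s" and ?fs = "f s (si s)"
  obtain c u where c_u: "z = (c, u)" by fastforce
  have "u = si s"
    using zx xz S.inverse_unique[of s u] unfolding c_u cp_mult_def by (simp add: S.assoc)
  then have c: "c \<cdot> ai c = \<alpha> (si s \<star> s)"
    using z unfolding c_u cp_carrier_def by simp
  have E: "?E \<star> ?E = ?E" by (rule S.mult_inv_idempotent)
  have lam_c: "lam s c \<cdot> ai (lam s c) = \<alpha> ?E"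
    using lam_grp_comp[OF c, of s] lam_alpha[OF S.inv_mult_idempotent[of s], of s]
    by (simp add: S.assoc)
  have "lam ?E (\<alpha> ?E) = \<alpha> ?E" and "f ?E s = \<alpha> ?E" and "?E \<star> s = s"
    using lam_idempotent[OF E] alpha_idempotent[OF E] f_idempotent_left[OF E, of s]
    by (simp_all add: S.assoc)
  then have "(lam s c \<cdot> ?fs) \<cdot> \<alpha> ?E \<cdot> \<alpha> ?E = \<alpha> ?E"
    using zx unfolding c_u \<open>u = si s\<close> cp_mult_def using A.grp_unit_left[OF lam_c] by simp
  then have "lam s c \<cdot> ?fs = \<alpha> ?E"
    using A.grp_unit_right[OF lam_c] A.grp_unit_right[OF f_inv_grp_comp] alpha_idempotent[OF E]
    by (simp add: A.assoc)
  then have "lam s c = ai ?fs"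
    using A.grp_unit_left[OF A.grp_comp_inv[OF f_inv_grp_comp]] f_inv_grp_comp A.grp_unit_right[OF lam_c]
    by (metis A.assoc)
  also have "\<dots> = lam s (ai (f (si s) s))"
    using lam_inv lam_f_inv by simp
  finally have "c = ai (f (si s) s)"
    using lam_inj_on_grp_comp[OF c] A.grp_comp_inv[OF f_inv_grp_comp[of "si s"]] by simp
  with c_u \<open>u = si s\<close> show ?thesis by simp
qed

lemma \<rho>_inverse:
  "sinv (cp_carrier mS mA \<alpha>) (cp_mult mS mA lam f) (\<rho> s) = (ai (f (si s) s), si s)"
  unfolding sinv_def[of "cp_carrier mS mA \<alpha>"]
proof (rule the_equality)
  have F: "ai (f (si s) s) \<cdot> ai (ai (f (si s) s)) = \<alpha> (si s \<star> s)"
    using A.grp_comp_inv[OF f_inv_grp_comp[of "si s"]] by simp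
  have "\<alpha> (s \<star> si s) \<cdot> \<alpha> (s \<star> si s) = \<alpha> (s \<star> si s)"
    by (rule alpha_idempotent[OF S.mult_inv_idempotent])
  moreover have "\<alpha> (si s \<star> s) \<cdot> \<alpha> (si s \<star> s) = \<alpha> (si s \<star> s)"
    by (rule alpha_idempotent[OF S.inv_mult_idempotent])
  ultimately show "(ai (f (si s) s), si s) \<in> cp_carrier mS mA \<alpha> \<and>
    cp_mult mS mA lam f (cp_mult mS mA lam f (\<rho> s) (ai (f (si s) s), si s)) (\<rho> s) = \<rho> s \<and>
    cp_mult mS mA lam f (cp_mult mS mA lam f (ai (f (si s) s), si s) (\<rho> s)) (ai (f (si s) s), si s)
      = (ai (f (si s) s), si s)"
    unfolding \<rho>_mult_inverse inverse_mult_\<rho>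
    using F lam_idempotent[OF S.mult_inv_idempotent] lam_idempotent[OF S.inv_mult_idempotent]
      f_idempotent_left[OF S.mult_inv_idempotent] f_idempotent_left[OF S.inv_mult_idempotent]
      A.grp_unit_left[OF F] A.grp_unit_right[OF F]
    by (simp add: cp_carrier_def cp_mult_def S.assoc)
qed (use cp_inverse_of_\<rho>_unique in blast)

lemma lam_mult_idempotent:
  assumes e: "e \<star> e = e"
  shows "\<alpha> (s \<star> e \<star> si s) \<cdot> lam (s \<star> e) x = \<alpha> (s \<star> e \<star> si s) \<cdot> lam s x"
proof -
  let ?g = "s \<star> e \<star> si s"
  have g: "\<alpha> ?g \<cdot> \<alpha> ?g = \<alpha> ?g"
    by (rule alpha_idempotent[OF S.conj_idempotent[OF e]])
  have "\<alpha> ?g \<cdot> lam s x = lam s (lam e x)"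
    using lam_idempotent[OF e] lam_mult lam_alpha[OF e] by simp
  also have "\<dots> = \<alpha> ?g \<cdot> lam (s \<star> e) x \<cdot> \<alpha> ?g"
    using lam_lam[of s e x] f_idempotent_right[OF e] A.idempotent_inv[OF g] by simp
  also have "\<dots> = \<alpha> ?g \<cdot> lam (s \<star> e) x"
    using A.idempotent_central[OF g, of "lam (s \<star> e) x"] g by (metis A.assoc)
  finally show ?thesis by simp
qed

lemma f_mult_idempotent_inv:
  assumes e: "e \<star> e = e"
  shows "f (s \<star> e) (si s) = f s (si s) \<cdot> \<alpha> (s \<star> e \<star> si s)"
proof -
  let ?g = "s \<star> e \<star> si s" and ?Fi = "si s \<star> s"
  have g: "?g \<star> ?g = ?g" by (rule S.conj_idempotent[OF e])
  txt \<open>Two instances of the cocycle identity, both with left-hand side \<open>\<alpha>(ses\<^sup>-\<^sup>1) f(s, es\<^sup>-\<^sup>1)\<close>.\<close>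
  have "\<alpha> ?g \<cdot> f s (e \<star> si s) = f (s \<star> e) (si s)"
  proof -
    have "e \<star> si s \<star> s = e \<star> ?Fi" by (simp add: S.assoc)
    then have "f e (si s) = \<alpha> (e \<star> ?Fi)"
      using f_idempotent_left[OF e, of "si s"] by simp
    moreover have "lam s (\<alpha> (e \<star> ?Fi)) = \<alpha> ?g"
      using lam_alpha[OF S.idempotent_mult_idempotent[OF e S.inv_mult_idempotent], of s]
      by (simp add: S.assoc)
    ultimately have "\<alpha> ?g \<cdot> f s (e \<star> si s) = \<alpha> ?g \<cdot> f (s \<star> e) (si s)"
      using cocycle[of s e "si s"] f_idempotent_right[OF e] by simp
    moreover have "f (s \<star> e) (si s) \<cdot> ai (f (s \<star> e) (si s)) = \<alpha> ?g"
      using f_grp_comp[of "s \<star> e" "si s"] S.idempotent_inv[OF g] g by simp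
    ultimately show ?thesis using A.grp_unit_left by metis
  qed
  moreover have "\<alpha> ?g \<cdot> f s (e \<star> si s) = f s (si s) \<cdot> \<alpha> ?g"
  proof -
    have "si s \<star> ?g = e \<star> si s" by (rule S.inv_mult_conj_idempotent[OF e])
    moreover have "f (si s) ?g = \<alpha> (si s \<star> ?g \<star> s)"
      using f_idempotent_right[OF g, of "si s"] by simp
    moreover have "lam s (\<alpha> (si s \<star> ?g \<star> s)) = \<alpha> ?g"
      using lam_alpha[OF S.conj_idempotent[OF g, of "si s"], of s] by (simp add: S.assoc)
    moreover have "f (s \<star> si s) ?g = \<alpha> ?g"
      using f_idempotent_right[OF g, of "s \<star> si s"] S.idempotent_inv[OF S.mult_inv_idempotent[of s]]
      by (simp add: S.assoc)
    ultimately show ?thesis using cocycle[of s "si s" ?g] by simp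
  qed
  ultimately show ?thesis by simp
qed

lemma \<rho>_mult_grp_comp:
  assumes e: "e \<star> e = e" and a: "\<alpha> e = a \<cdot> ai a"
  shows "cp_mult mS mA lam f (\<rho> s) (a, e) = (lam s a, s \<star> e)"
proof -
  let ?g = "s \<star> e \<star> si s"
  have lam_a: "lam s a \<cdot> ai (lam s a) = \<alpha> ?g"
    using lam_grp_comp[OF a[symmetric], of s] lam_alpha[OF e, of s] by simp
  have "(s \<star> si s) \<star> ?g = ?g" by (metis S.assoc S.mult_inv_mult)
  then have "\<alpha> (s \<star> si s) \<cdot> \<alpha> ?g = \<alpha> ?g"
    using alpha_mult[OF S.mult_inv_idempotent[of s] S.conj_idempotent[OF e, of s]] by simp
  then have "\<alpha> (s \<star> si s) \<cdot> lam s a = lam s a"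
    using A.grp_unit_left[OF lam_a] by (metis A.assoc)
  then show ?thesis
    unfolding cp_mult_def using f_idempotent_right[OF e] A.grp_unit_right[OF lam_a] by simp
qed

lemma induced_lambda_\<rho>: "induced_lambda mS mA \<alpha> lam f \<rho> s a = lam s a"
proof -
  obtain e where e: "e \<star> e = e" and a: "\<alpha> e = a \<cdot> ai a" and i_a: "cp_i mS mA \<alpha> a = (a, e)"
    using cp_i_obtain .
  let ?g = "s \<star> e \<star> si s" and ?fs = "f s (si s)"
  have g: "?g \<star> ?g = ?g" by (rule S.conj_idempotent[OF e])
  have lam_a: "lam s a \<cdot> ai (lam s a) = \<alpha> ?g"
    using lam_grp_comp[OF a[symmetric], of s] lam_alpha[OF e, of s] by simp
  have E_g: "\<alpha> (s \<star> si s) \<cdot> \<alpha> ?g = \<alpha> ?g"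
    using alpha_mult[OF S.mult_inv_idempotent g, of s] by (metis S.assoc S.mult_inv_mult)
  have lam_a_se: "lam s a \<cdot> lam (s \<star> e) z = lam s a \<cdot> lam s z" for z
    using A.grp_unit_right[OF lam_a] lam_mult_idempotent[OF e, of s z] by (metis A.assoc)
  have "(lam s a \<cdot> lam (s \<star> e) (ai (f (si s) s))) \<cdot> f (s \<star> e) (si s)
      = (lam s a \<cdot> lam s (ai (f (si s) s))) \<cdot> (?fs \<cdot> \<alpha> ?g)"
    using lam_a_se f_mult_idempotent_inv[OF e] by simp
  also have "\<dots> = lam s a \<cdot> (ai ?fs \<cdot> ?fs) \<cdot> \<alpha> ?g"
    using lam_inv[of s "f (si s) s"] lam_f_inv[of s] by (simp add: A.assoc)
  also have "\<dots> = lam s a \<cdot> (\<alpha> (s \<star> si s) \<cdot> \<alpha> ?g)"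
    using A.grp_inv_mult[OF f_inv_grp_comp] by (simp add: A.assoc)
  also have "\<dots> = lam s a"
    using E_g A.grp_unit_right[OF lam_a] by simp
  finally have "cp_mult mS mA lam f (lam s a, s \<star> e) (ai (f (si s) s), si s) = (lam s a, ?g)"
    unfolding cp_mult_def by simp
  then show ?thesis
    unfolding induced_lambda_def i_a \<rho>_mult_grp_comp[OF e a] \<rho>_inverse
    using i_inv_eq[OF lam_a g] by simp
qed

end

theorem corollary3p30:
  fixes mS :: "'s \<Rightarrow> 's \<Rightarrow> 's" and mA :: "'a \<Rightarrow> 'a \<Rightarrow> 'a"
    and \<alpha> :: "'s \<Rightarrow> 'a" and lam :: "'s \<Rightarrow> 'a \<Rightarrow> 'a" and f :: "'s \<Rightarrow> 's \<Rightarrow> 'a"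
  assumes "inv_sg UNIV mS"
    and "semilattice_of_groups mA"
    and "sieben mS mA \<alpha> lam f"
  defines "\<rho> \<equiv> (\<lambda>s. (\<alpha> (mS s (sinv UNIV mS s)), s))"
  shows "is_transversal mS mA \<alpha> lam f \<rho> \<and>
         (\<forall>e\<in>idem UNIV mS. induced_alpha mS mA \<alpha> \<rho> e = \<alpha> e) \<and>
         (\<forall>s a. induced_lambda mS mA \<alpha> lam f \<rho> s a = lam s a) \<and>
         (\<forall>s t. induced_f mS mA \<alpha> lam f \<rho> s t = f s t)"
proof -
  interpret sieben_module mS mA \<alpha> lam f
    unfolding sieben_module_def sieben_module_axioms_def inverse_semigroup_def
    using assms(1,3) semilattice_of_groups_clifford[OF assms(2)] by blast
  show ?thesis
    unfolding \<rho>_def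
    using is_transversal_\<rho> induced_alpha_\<rho> induced_lambda_\<rho> induced_f_\<rho>
    by (simp add: S.idem_UNIV)
qed

end
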